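(* Let $M\ge 2$ and $N$ be positive integers, and let $C_0,\dots,C_{N-1}$ be i.i.d. random variables, each uniformly distributed on $\{0,1,\dots,M-1\}$. For $m\in\{0,\dots,M-1\}$ and $n\in\{0,\dots,N-1\}$ let $\zeta_{n,m}=1$ if $C_n=m$ and $\zeta_{n,m}=0$ otherwise, and for an integer $\Delta q$ let $\lambda_m^{\Delta q}=\frac{M}{N}\sum_{n=0}^{N-1}\zeta_{n,m}e^{j2\pi\frac{\Delta q}{N}n}$. Define $\bar\sigma_m^{\Delta q}=|\lambda_m^0-1|$ if $\Delta q=0$ and $\bar\sigma_m^{\Delta q}=|\lambda_m^{\Delta q}|$ if $\Delta q\neq0$. Then for every $0<\epsilon\le1$, every $m\in\{0,\dots,M-1\}$ and every $\Delta q\in\{0,1,\dots,\lfloor N/2\rfloor\}$, $$\mathbb{P}\left(\bar\sigma_m^{\Delta q}>\sqrt{\frac{M-1}{N}}+\epsilon\right)<e^{-\frac{N}{4(M-1)}\epsilon^2}.$$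
   Context: $j$ denotes the imaginary unit. The quantities $\bar\sigma_m^{\Delta q}$ are the singular values of $\bm\Psi_{q_1}^H\bm\Psi_{q_2}$ (minus the identity when $q_1=q_2$) for $\Delta q=q_2-q_1$, where $[\bm\psi_{p,q}]_n=\frac{1}{\sqrt N}e^{j\frac{2\pi p}{M}C_n+j\frac{2\pi q}{N}n}$; this interpretation is not needed for the statement. *)

theory Defs
  imports "HOL-Probability.Probability"
begin

text \<open>Joint law of the i.i.d. code symbols C_0..C_{N-1}, each uniform on {0..M-1}:
  the uniform distribution on the (finite) set of functions {0..N-1} -> {0..M-1}
  (extensional, i.e. undefined outside {0..N-1}).\<close>
definition code_pmf :: "nat \<Rightarrow> nat \<Rightarrow> (nat \<Rightarrow> nat) pmf" where
  "code_pmf M N = pmf_of_set (PiE {..<N} (\<lambda>_. {..<M}))"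

definition zeta :: "(nat \<Rightarrow> nat) \<Rightarrow> nat \<Rightarrow> nat \<Rightarrow> real" where
  "zeta C n m = (if C n = m then 1 else 0)"

definition lambda_coef :: "nat \<Rightarrow> nat \<Rightarrow> (nat \<Rightarrow> nat) \<Rightarrow> nat \<Rightarrow> int \<Rightarrow> complex" where
  "lambda_coef M N C m dq =
     complex_of_real (real M / real N) *
     (\<Sum>n<N. complex_of_real (zeta C n m) *
        exp (\<i> * complex_of_real (2 * pi * real_of_int dq * real n / real N)))"

definition sigma_bar :: "nat \<Rightarrow> nat \<Rightarrow> (nat \<Rightarrow> nat) \<Rightarrow> nat \<Rightarrow> int \<Rightarrow> real" where
  "sigma_bar M N C m dq =
     (if dq = 0 then cmod (lambda_coef M N C m 0 - 1) else cmod (lambda_coef M N C m dq))"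

end

theory Submission
  imports Defs
begin

(*
  Put W = lambda_m^dq - [dq = 0], so that sigma_bar = |W|. W is a sum of functions of the
  single code symbols and has mean zero: zeta_{n,m} has mean 1/M, and the dq-th powers of the
  N-th roots of unity sum to zero for 0 < dq < N. Replacing C_n by a moves W within c(a) of a
  quantity not depending on C_n, where c(m) = (M-1)/N and c(a) = 1/N otherwise, so c^2 has
  mean s = (M-1)/N^2. Revealing the symbols one at a time (a Doob martingale), the variance of
  W is at most N s, hence E|W| <= sqrt((M-1)/N); and since exp y <= 1 + y + y^2 for y <= 1, each
  step multiplies the moment generating function of |W| - E|W| by at most 1 + l^2 s as long as
  2 l max c <= 1. Chernoff's bound with l = eps/(2 N s) gives the claim, strictly because
  1 + u < exp u for u > 0.
*)

definition words :: "'b set \<Rightarrow> nat \<Rightarrow> (nat \<Rightarrow> 'b) set" where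
  "words A n = PiE {..<n} (\<lambda>_. A)"

definition mean :: "'a set \<Rightarrow> ('a \<Rightarrow> 'b::real_vector) \<Rightarrow> 'b" where
  "mean S f = sum f S /\<^sub>R real (card S)"

lemma mean_const: "finite S \<Longrightarrow> S \<noteq> {} \<Longrightarrow> mean S (\<lambda>_. c) = c"
  unfolding mean_def by (simp add: sum_constant_scaleR)

lemma mean_add: "mean S (\<lambda>x. f x + g x) = mean S f + mean S g"
  unfolding mean_def by (simp add: sum.distrib scaleR_add_right)

lemma mean_diff: "mean S (\<lambda>x. f x - g x) = mean S f - mean S g"
  unfolding mean_def by (simp add: sum_subtractf scaleR_diff_right)

lemma mean_sum: "mean S (\<lambda>x. \<Sum>i\<in>I. f i x) = (\<Sum>i\<in>I. mean S (f i))"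
  unfolding mean_def by (simp add: sum.swap[of _ I] scaleR_sum_right)

lemma mean_mult_left:
  fixes f :: "'a \<Rightarrow> 'b::real_algebra"
  shows "mean S (\<lambda>x. c * f x) = c * mean S f"
  unfolding mean_def by (simp add: sum_distrib_left)

lemma mean_inner_left: "mean S (\<lambda>x. f x \<bullet> w) = mean S f \<bullet> w"
  unfolding mean_def by (simp add: inner_sum_left)

lemma mean_mono:
  fixes f g :: "'a \<Rightarrow> real"
  shows "(\<And>x. x \<in> S \<Longrightarrow> f x \<le> g x) \<Longrightarrow> mean S f \<le> mean S g"
  unfolding mean_def by (auto intro!: mult_left_mono sum_mono)

lemma norm_mean_le: "norm (mean S f) \<le> mean S (\<lambda>x. norm (f x))"
  unfolding mean_def by (auto intro!: mult_left_mono norm_sum)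

lemma mean_norm_diff_sq:
  fixes f :: "'a \<Rightarrow> 'b::real_inner"
  assumes "finite S" "S \<noteq> {}"
  shows "mean S (\<lambda>x. (norm (f x - z))\<^sup>2)
           = mean S (\<lambda>x. (norm (f x - mean S f))\<^sup>2) + (norm (mean S f - z))\<^sup>2"
proof -
  let ?g = "mean S f"
  have "(norm (f x - z))\<^sup>2 = (norm (f x - ?g))\<^sup>2 + 2 * ((f x - ?g) \<bullet> (?g - z)) + (norm (?g - z))\<^sup>2"
    for x
    unfolding power2_norm_eq_inner by (simp add: algebra_simps inner_commute)
  moreover have "mean S (\<lambda>x. (f x - ?g) \<bullet> (?g - z)) = 0"
    using assms by (simp add: mean_inner_left mean_diff mean_const)
  ultimately show ?thesis
    using assms by (simp add: mean_add mean_mult_left mean_const)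
qed

lemma mean_nonneg:
  fixes f :: "'a \<Rightarrow> real"
  shows "(\<And>x. x \<in> S \<Longrightarrow> 0 \<le> f x) \<Longrightarrow> 0 \<le> mean S f"
  unfolding mean_def by (simp add: sum_nonneg)

lemma norm_mean_sq_le:
  fixes f :: "'a \<Rightarrow> 'b::real_inner"
  assumes "finite S" "S \<noteq> {}"
  shows "(norm (mean S f))\<^sup>2 \<le> mean S (\<lambda>x. (norm (f x))\<^sup>2)"
  using mean_norm_diff_sq[OF assms, of f 0] mean_nonneg[of S "\<lambda>x. (norm (f x - mean S f))\<^sup>2"]
  by simp

lemma finite_words: "finite A \<Longrightarrow> finite (words A n)"
  unfolding words_def by (simp add: finite_PiE)

lemma card_words: "card (words A n) = card A ^ n"
  unfolding words_def by (simp add: card_PiE)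

lemma words_nonempty: "A \<noteq> {} \<Longrightarrow> words A n \<noteq> {}"
  unfolding words_def by (simp add: PiE_eq_empty_iff)

lemma fun_upd_in_words_Suc: "C \<in> words A n \<Longrightarrow> a \<in> A \<Longrightarrow> C(n := a) \<in> words A (Suc n)"
  unfolding words_def by (auto simp: PiE_def extensional_def Pi_def)

lemma sum_words_Suc: "sum F (words A (Suc n)) = (\<Sum>C\<in>words A n. \<Sum>a\<in>A. F (C(n := a)))"
proof -
  have "sum F (words A (Suc n)) = (\<Sum>(a, C)\<in>A \<times> words A n. F (C(n := a)))"
    unfolding words_def lessThan_Suc PiE_insert_eq
    by (subst sum.reindex) (auto intro: inj_combinator simp: case_prod_beta)
  also have "\<dots> = (\<Sum>C\<in>words A n. \<Sum>a\<in>A. F (C(n := a)))"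
    by (simp add: sum.cartesian_product[symmetric] sum.swap[of _ A])
  finally show ?thesis .
qed

lemma mean_words_Suc:
  "mean (words A (Suc n)) F = mean (words A n) (\<lambda>C. mean A (\<lambda>a. F (C(n := a))))"
  unfolding mean_def card_words sum_words_Suc
  by (simp add: scaleR_sum_right[symmetric] mult.commute)

lemma mean_words_coordinate:
  assumes "finite A" "A \<noteq> {}" "k < n"
  shows "mean (words A n) (\<lambda>C. \<phi> (C k)) = mean A \<phi>"
  using assms(3)
proof (induction n)
  case (Suc n)
  then show ?case
    using assms(1,2)
    by (cases "k = n") (simp_all add: mean_words_Suc mean_const finite_words words_nonempty)
qed simp

(* The bound may depend on the value C k, not only on k: this is what makes the mean of c^2,
   rather than the square of its maximum, the variance proxy below. *)
definition bounded_difference_at ::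
    "'b set \<Rightarrow> nat \<Rightarrow> ((nat \<Rightarrow> 'b) \<Rightarrow> 'a::real_normed_vector) \<Rightarrow> nat \<Rightarrow> ('b \<Rightarrow> real) \<Rightarrow> bool" where
  "bounded_difference_at A n F k c \<longleftrightarrow>
     (\<exists>h. (\<forall>C\<in>words A n. \<forall>b\<in>A. h (C(k := b)) = h C) \<and>
          (\<forall>C\<in>words A n. norm (F C - h C) \<le> c (C k)))"

lemma bounded_difference_at_norm:
  assumes "bounded_difference_at A n F k c"
  shows "bounded_difference_at A n (\<lambda>C. norm (F C)) k c"
proof -
  obtain h where "\<forall>C\<in>words A n. \<forall>b\<in>A. h (C(k := b)) = h C"
    and "\<forall>C\<in>words A n. norm (F C - h C) \<le> c (C k)"
    using assms unfolding bounded_difference_at_def by blast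
  then show ?thesis
    unfolding bounded_difference_at_def
    by (intro exI[of _ "\<lambda>C. norm (h C)"]) (auto intro: order_trans[OF norm_triangle_ineq3])
qed

lemma bounded_difference_at_diff_const:
  assumes "bounded_difference_at A n F k c"
  shows "bounded_difference_at A n (\<lambda>C. F C - d) k c"
proof -
  obtain h where "\<forall>C\<in>words A n. \<forall>b\<in>A. h (C(k := b)) = h C"
    and "\<forall>C\<in>words A n. norm (F C - h C) \<le> c (C k)"
    using assms unfolding bounded_difference_at_def by blast
  then show ?thesis
    unfolding bounded_difference_at_def by (intro exI[of _ "\<lambda>C. h C - d"]) simp
qed

lemma bounded_difference_at_sum_coordinates:
  assumes "k < n" and "\<And>a. a \<in> A \<Longrightarrow> norm (g k a - z) \<le> c a"
  shows "bounded_difference_at A n (\<lambda>C. \<Sum>i<n. g i (C i)) k c"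
  unfolding bounded_difference_at_def
proof (intro exI[of _ "\<lambda>C. (\<Sum>i\<in>{..<n} - {k}. g i (C i)) + z"] conjI ballI)
  fix C b
  show "(\<Sum>i\<in>{..<n} - {k}. g i ((C(k := b)) i)) + z = (\<Sum>i\<in>{..<n} - {k}. g i (C i)) + z"
    by (intro arg_cong2[where f = "(+)"] sum.cong) auto
next
  fix C assume "C \<in> words A n"
  then have "C k \<in> A" using assms(1) by (auto simp: words_def)
  moreover have "(\<Sum>i<n. g i (C i)) = g k (C k) + (\<Sum>i\<in>{..<n} - {k}. g i (C i))"
    using assms(1) by (simp add: sum.remove)
  ultimately show "norm ((\<Sum>i<n. g i (C i)) - ((\<Sum>i\<in>{..<n} - {k}. g i (C i)) + z)) \<le> c (C k)"
    using assms(2) by (simp add: algebra_simps)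
qed

lemma bounded_difference_at_mean_last:
  assumes A: "finite A" "A \<noteq> {}" and "k < n"
    and "bounded_difference_at A (Suc n) F k c"
  shows "bounded_difference_at A n (\<lambda>C. mean A (\<lambda>a. F (C(n := a)))) k c"
proof -
  obtain h where h_indep: "\<And>C b. C \<in> words A (Suc n) \<Longrightarrow> b \<in> A \<Longrightarrow> h (C(k := b)) = h C"
    and h_close: "\<And>C. C \<in> words A (Suc n) \<Longrightarrow> norm (F C - h C) \<le> c (C k)"
    using assms(4) unfolding bounded_difference_at_def by blast
  show ?thesis
    unfolding bounded_difference_at_def
  proof (intro exI[of _ "\<lambda>C. mean A (\<lambda>a. h (C(n := a)))"] conjI ballI)
    fix C b assume C: "C \<in> words A n" and b: "b \<in> A"
    have "h (C(k := b, n := a)) = h (C(n := a))" if "a \<in> A" for a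
      using h_indep[OF fun_upd_in_words_Suc[OF C that] b] \<open>k < n\<close> by (simp add: fun_upd_twist)
    then show "mean A (\<lambda>a. h ((C(k := b))(n := a))) = mean A (\<lambda>a. h (C(n := a)))"
      unfolding mean_def by simp
  next
    fix C assume C: "C \<in> words A n"
    have "norm (mean A (\<lambda>a. F (C(n := a))) - mean A (\<lambda>a. h (C(n := a))))
          \<le> mean A (\<lambda>a. norm (F (C(n := a)) - h (C(n := a))))"
      unfolding mean_diff[symmetric] by (rule norm_mean_le)
    also have "\<dots> \<le> mean A (\<lambda>_. c (C k))"
      using h_close[OF fun_upd_in_words_Suc[OF C]] \<open>k < n\<close> by (intro mean_mono) auto
    finally show "norm (mean A (\<lambda>a. F (C(n := a))) - mean A (\<lambda>a. h (C(n := a)))) \<le> c (C k)"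
      using A by (simp add: mean_const)
  qed
qed

lemma bounded_difference_at_last:
  assumes "A \<noteq> {}" "bounded_difference_at A (Suc n) F n c" "C \<in> words A n"
  obtains H where "\<And>a. a \<in> A \<Longrightarrow> norm (F (C(n := a)) - H) \<le> c a"
proof -
  obtain h where h_indep: "\<And>C b. C \<in> words A (Suc n) \<Longrightarrow> b \<in> A \<Longrightarrow> h (C(n := b)) = h C"
    and h_close: "\<And>C. C \<in> words A (Suc n) \<Longrightarrow> norm (F C - h C) \<le> c (C n)"
    using assms(2) unfolding bounded_difference_at_def by blast
  obtain a0 where a0: "a0 \<in> A" using assms(1) by blast
  have "h (C(n := a)) = h (C(n := a0))" if "a \<in> A" for a
    using h_indep[OF fun_upd_in_words_Suc[OF assms(3) a0] that] by simp
  then show thesis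
    using h_close[OF fun_upd_in_words_Suc[OF assms(3)]] by (intro that[of "h (C(n := a0))"]) force
qed

lemma bounded_differences_variance_le:
  fixes F :: "(nat \<Rightarrow> 'b) \<Rightarrow> 'a::real_inner"
  assumes A: "finite A" "A \<noteq> {}" and s: "mean A (\<lambda>a. (c a)\<^sup>2) \<le> s"
    and "\<forall>k<n. bounded_difference_at A n F k c"
  shows "mean (words A n) (\<lambda>C. (norm (F C - mean (words A n) F))\<^sup>2) \<le> real n * s"
  using assms(4)
proof (induction n arbitrary: F)
  case 0
  then show ?case by (simp add: words_def mean_def)
next
  case (Suc n)
  define G where "G = (\<lambda>C. mean A (\<lambda>a. F (C(n := a))))"
  have fibre: "mean A (\<lambda>a. (norm (F (C(n := a)) - G C))\<^sup>2) \<le> s" if C: "C \<in> words A n" for C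
  proof -
    obtain H where H: "\<And>a. a \<in> A \<Longrightarrow> norm (F (C(n := a)) - H) \<le> c a"
      using bounded_difference_at_last[OF A(2) _ C] Suc.prems by blast
    have "mean A (\<lambda>a. (norm (F (C(n := a)) - G C))\<^sup>2) \<le> mean A (\<lambda>a. (norm (F (C(n := a)) - H))\<^sup>2)"
      using mean_norm_diff_sq[OF A, of "\<lambda>a. F (C(n := a))" H] unfolding G_def by simp
    also have "\<dots> \<le> mean A (\<lambda>a. (c a)\<^sup>2)"
      using H by (intro mean_mono power_mono) auto
    finally show ?thesis using s by linarith
  qed
  have "mean (words A n) (\<lambda>C. mean A (\<lambda>a. (norm (F (C(n := a)) - G C))\<^sup>2))
        \<le> mean (words A n) (\<lambda>_. s)"
    using fibre by (rule mean_mono)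
  also have "\<dots> = s"
    using A by (simp add: mean_const finite_words words_nonempty)
  finally have within: "mean (words A n) (\<lambda>C. mean A (\<lambda>a. (norm (F (C(n := a)) - G C))\<^sup>2)) \<le> s" .
  have between: "mean (words A n) (\<lambda>C. (norm (G C - mean (words A n) G))\<^sup>2) \<le> real n * s"
  proof (rule Suc.IH)
    show "\<forall>k<n. bounded_difference_at A n G k c"
      unfolding G_def using Suc.prems by (auto intro: bounded_difference_at_mean_last[OF A])
  qed
  have "mean (words A (Suc n)) F = mean (words A n) G"
    unfolding G_def by (rule mean_words_Suc)
  then have "mean (words A (Suc n)) (\<lambda>C. (norm (F C - mean (words A (Suc n)) F))\<^sup>2)
      = mean (words A n) (\<lambda>C. mean A (\<lambda>a. (norm (F (C(n := a)) - mean (words A n) G))\<^sup>2))"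
    by (simp add: mean_words_Suc)
  also have "\<dots> = mean (words A n) (\<lambda>C. mean A (\<lambda>a. (norm (F (C(n := a)) - G C))\<^sup>2)
                                     + (norm (G C - mean (words A n) G))\<^sup>2)"
    unfolding G_def by (subst mean_norm_diff_sq[OF A]) (rule refl)
  also have "\<dots> = mean (words A n) (\<lambda>C. mean A (\<lambda>a. (norm (F (C(n := a)) - G C))\<^sup>2))
                   + mean (words A n) (\<lambda>C. (norm (G C - mean (words A n) G))\<^sup>2)"
    by (rule mean_add)
  finally show ?case using within between by (simp add: algebra_simps)
qed

lemma exp_le_1_plus_quadratic:
  fixes y :: real
  assumes "y \<le> 1"
  shows "exp y \<le> 1 + y + y\<^sup>2"
proof (cases "0 \<le> y")
  case True
  then show ?thesis using exp_bound assms by simp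
next
  case False
  define u where "u = - y"
  have u: "0 < u" using False by (simp add: u_def)
  have pos: "0 < 1 + u + u\<^sup>2 / 2" using u by (simp add: add_pos_nonneg)
  have "exp y = 1 / exp u" by (simp add: u_def exp_minus field_simps)
  also have "\<dots> \<le> 1 / (1 + u + u\<^sup>2 / 2)"
    using exp_lower_Taylor_quadratic[of u] u pos by (intro divide_left_mono) auto
  also have "\<dots> \<le> 1 - u + u\<^sup>2"
  proof -
    have "(1 - u + u\<^sup>2) * (1 + u + u\<^sup>2 / 2) = 1 + (u\<^sup>2 + u ^ 3 + u ^ 4) / 2"
      by (simp add: power2_eq_square power3_eq_cube power4_eq_xxxx field_simps)
    then have "1 \<le> (1 - u + u\<^sup>2) * (1 + u + u\<^sup>2 / 2)" using u by simp
    then show ?thesis using pos by (simp add: divide_le_eq)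
  qed
  finally show ?thesis by (simp add: u_def)
qed

lemma mean_exp_centered_le:
  fixes x :: "'b \<Rightarrow> real"
  assumes A: "finite A" "A \<noteq> {}"
    and x: "\<And>a. a \<in> A \<Longrightarrow> \<bar>x a - H\<bar> \<le> c a" and c: "\<And>a. a \<in> A \<Longrightarrow> c a \<le> \<mu>"
    and s: "mean A (\<lambda>a. (c a)\<^sup>2) \<le> s" and l: "0 \<le> l" "2 * l * \<mu> \<le> 1"
  shows "mean A (\<lambda>a. exp (l * (x a - mean A x))) \<le> 1 + l\<^sup>2 * s"
proof -
  let ?g = "mean A x"
  have "\<bar>?g - H\<bar> = \<bar>mean A (\<lambda>a. x a - H)\<bar>"
    using A by (simp add: mean_diff mean_const)
  also have "\<dots> \<le> mean A (\<lambda>_. \<mu>)"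
    using norm_mean_le[of A "\<lambda>a. x a - H"] x c
    by (auto intro: order_trans[OF _ mean_mono] order_trans)
  finally have g: "\<bar>?g - H\<bar> \<le> \<mu>" using A by (simp add: mean_const)
  have "l * (x a - ?g) \<le> 1" if "a \<in> A" for a
  proof -
    have "x a - ?g \<le> 2 * \<mu>" using x[OF that] c[OF that] g by linarith
    then show ?thesis using l mult_left_mono by fastforce
  qed
  then have "mean A (\<lambda>a. exp (l * (x a - ?g)))
             \<le> mean A (\<lambda>a. 1 + l * (x a - ?g) + (l * (x a - ?g))\<^sup>2)"
    by (intro mean_mono exp_le_1_plus_quadratic)
  also have "\<dots> = 1 + l * mean A (\<lambda>a. x a - ?g) + l\<^sup>2 * mean A (\<lambda>a. (x a - ?g)\<^sup>2)"
    using A by (simp add: mean_add mean_mult_left mean_const power_mult_distrib)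
  also have "mean A (\<lambda>a. x a - ?g) = 0"
    using A by (simp add: mean_diff mean_const)
  also have "mean A (\<lambda>a. (x a - ?g)\<^sup>2) \<le> mean A (\<lambda>a. (x a - H)\<^sup>2)"
    using mean_norm_diff_sq[OF A, of x H] by simp
  also have "\<dots> \<le> mean A (\<lambda>a. (c a)\<^sup>2)"
  proof (rule mean_mono)
    fix a assume "a \<in> A"
    then have "\<bar>x a - H\<bar>\<^sup>2 \<le> (c a)\<^sup>2" using x by (intro power_mono) auto
    then show "(x a - H)\<^sup>2 \<le> (c a)\<^sup>2" by simp
  qed
  also have "\<dots> \<le> s" by (rule s)
  finally show ?thesis using l by (simp add: mult_left_mono)
qed

lemma bounded_differences_mgf_le:
  fixes f :: "(nat \<Rightarrow> 'b) \<Rightarrow> real"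
  assumes A: "finite A" "A \<noteq> {}" and c: "\<And>a. a \<in> A \<Longrightarrow> c a \<le> \<mu>"
    and s: "mean A (\<lambda>a. (c a)\<^sup>2) \<le> s" and l: "0 \<le> l" "2 * l * \<mu> \<le> 1"
    and "\<forall>k<n. bounded_difference_at A n f k c"
  shows "mean (words A n) (\<lambda>C. exp (l * (f C - mean (words A n) f))) \<le> (1 + l\<^sup>2 * s) ^ n"
  using assms(7)
proof (induction n arbitrary: f)
  case 0
  then show ?case by (simp add: words_def mean_def)
next
  case (Suc n)
  define G where "G = (\<lambda>C. mean A (\<lambda>a. f (C(n := a))))"
  have "0 \<le> s" using s mean_nonneg[of A "\<lambda>a. (c a)\<^sup>2"] by simp
  then have factor_nonneg: "0 \<le> 1 + l\<^sup>2 * s" by simp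
  have fibre: "mean A (\<lambda>a. exp (l * (f (C(n := a)) - G C))) \<le> 1 + l\<^sup>2 * s"
    if C: "C \<in> words A n" for C
  proof -
    obtain H where "\<And>a. a \<in> A \<Longrightarrow> norm (f (C(n := a)) - H) \<le> c a"
      using bounded_difference_at_last[OF A(2) _ C] Suc.prems by blast
    then show ?thesis
      unfolding G_def by (intro mean_exp_centered_le[OF A _ c s l]) auto
  qed
  have averaged: "mean (words A n) (\<lambda>C. exp (l * (G C - mean (words A n) G))) \<le> (1 + l\<^sup>2 * s) ^ n"
  proof (rule Suc.IH)
    show "\<forall>k<n. bounded_difference_at A n G k c"
      unfolding G_def using Suc.prems by (auto intro: bounded_difference_at_mean_last[OF A])
  qed
  have "mean (words A (Suc n)) f = mean (words A n) G"
    unfolding G_def by (rule mean_words_Suc)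
  then have "mean (words A (Suc n)) (\<lambda>C. exp (l * (f C - mean (words A (Suc n)) f)))
      = mean (words A n) (\<lambda>C. mean A (\<lambda>a. exp (l * (f (C(n := a)) - mean (words A n) G))))"
    by (simp add: mean_words_Suc)
  also have "\<dots> = mean (words A n) (\<lambda>C. exp (l * (G C - mean (words A n) G))
                                        * mean A (\<lambda>a. exp (l * (f (C(n := a)) - G C))))"
    by (simp add: mean_mult_left[symmetric] exp_add[symmetric] algebra_simps)
  also have "\<dots> \<le> mean (words A n) (\<lambda>C. exp (l * (G C - mean (words A n) G)) * (1 + l\<^sup>2 * s))"
    using fibre by (intro mean_mono mult_left_mono) auto
  also have "\<dots> = (1 + l\<^sup>2 * s) * mean (words A n) (\<lambda>C. exp (l * (G C - mean (words A n) G)))"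
    by (simp add: mean_mult_left[symmetric] mult.commute)
  also have "\<dots> \<le> (1 + l\<^sup>2 * s) * (1 + l\<^sup>2 * s) ^ n"
    by (rule mult_left_mono[OF averaged factor_nonneg])
  finally show ?case by simp
qed

lemma prob_pmf_of_set_ge_le_mean_exp:
  fixes f :: "'a \<Rightarrow> real"
  assumes S: "finite S" "S \<noteq> {}" and "0 \<le> l"
  shows "measure_pmf.prob (pmf_of_set S) {x. t \<le> f x} \<le> mean S (\<lambda>x. exp (l * (f x - t)))"
proof -
  have "real (card (S \<inter> {x. t \<le> f x})) = (\<Sum>x\<in>S \<inter> {x. t \<le> f x}. 1)"
    by simp
  also have "\<dots> \<le> (\<Sum>x\<in>S \<inter> {x. t \<le> f x}. exp (l * (f x - t)))"
    using \<open>0 \<le> l\<close> by (intro sum_mono) simp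
  also have "\<dots> \<le> (\<Sum>x\<in>S. exp (l * (f x - t)))"
    using S by (intro sum_mono2) auto
  finally have "real (card (S \<inter> {x. t \<le> f x})) / real (card S)
               \<le> (\<Sum>x\<in>S. exp (l * (f x - t))) / real (card S)"
    by (rule divide_right_mono) simp
  then show ?thesis
    using S by (simp add: measure_pmf_of_set mean_def divide_inverse_commute)
qed

lemma bounded_differences_tail:
  fixes f :: "(nat \<Rightarrow> 'b) \<Rightarrow> real"
  assumes A: "finite A" "A \<noteq> {}" and c: "\<And>a. a \<in> A \<Longrightarrow> c a \<le> \<mu>"
    and s: "mean A (\<lambda>a. (c a)\<^sup>2) \<le> s" "0 < s"
    and bd: "\<forall>k<n. bounded_difference_at A n f k c"
    and n: "0 < n" and t: "0 < t" "t * \<mu> \<le> real n * s"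
  shows "measure_pmf.prob (pmf_of_set (words A n)) {C. mean (words A n) f + t \<le> f C}
           < exp (- t\<^sup>2 / (4 * real n * s))"
proof -
  define l where "l = t / (2 * real n * s)"
  have l: "0 < l" "2 * l * \<mu> \<le> 1"
    using n t s(2) by (simp_all add: l_def field_simps)
  let ?m = "mean (words A n) f"
  have "measure_pmf.prob (pmf_of_set (words A n)) {C. ?m + t \<le> f C}
        \<le> mean (words A n) (\<lambda>C. exp (l * (f C - (?m + t))))"
    using prob_pmf_of_set_ge_le_mean_exp[of "words A n" l "?m + t" f] A l
    by (simp add: finite_words words_nonempty)
  also have "\<dots> = exp (- l * t) * mean (words A n) (\<lambda>C. exp (l * (f C - ?m)))"
    by (simp add: mean_mult_left[symmetric] exp_add[symmetric] algebra_simps)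
  also have "\<dots> \<le> exp (- l * t) * (1 + l\<^sup>2 * s) ^ n"
    using bounded_differences_mgf_le[OF A c s(1) _ l(2) bd] l by simp
  also have "\<dots> < exp (- l * t) * exp (l\<^sup>2 * s) ^ n"
    using exp_minus_greater[of "- (l\<^sup>2 * s)"] l s(2) n
    by (intro mult_strict_left_mono power_strict_mono) auto
  also have "\<dots> = exp (- t\<^sup>2 / (4 * real n * s))"
    using s(2) n
    by (simp add: exp_of_nat_mult[symmetric] exp_add[symmetric] l_def power2_eq_square field_simps)
  finally show ?thesis .
qed

definition dft_phase :: "nat \<Rightarrow> int \<Rightarrow> nat \<Rightarrow> complex" where
  "dft_phase N dq n = exp (\<i> * complex_of_real (2 * pi * real_of_int dq * real n / real N))"

lemma norm_dft_phase [simp]: "norm (dft_phase N dq n) = 1"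
  unfolding dft_phase_def by simp

lemma sum_dft_phase_eq_0:
  assumes "0 < N" "\<not> int N dvd dq"
  shows "(\<Sum>n<N. dft_phase N dq n) = 0"
proof -
  define w where "w = exp (\<i> * complex_of_real (2 * pi * real_of_int dq / real N))"
  have powers: "dft_phase N dq n = w ^ n" for n
    unfolding dft_phase_def w_def exp_of_nat_mult[symmetric] by (simp add: field_simps)
  have "w ^ N = exp (complex_of_real (2 * real_of_int dq * pi) * \<i>)"
    using assms(1) unfolding w_def exp_of_nat_mult[symmetric] by (simp add: field_simps)
  then have "w ^ N = 1"
    using exp_integer_2pi[of "of_int dq"] by simp
  moreover have "w \<noteq> 1"
  proof
    assume "w = 1"
    then obtain k :: int where "2 * pi * real_of_int dq / real N = real_of_int (2 * k) * pi"
      unfolding w_def exp_eq_1 by auto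
    then have "real_of_int dq = real_of_int (k * int N)"
      using assms(1) by (simp add: field_simps)
    then show False
      using assms(2) by (metis dvd_triv_right of_int_eq_iff)
  qed
  ultimately show ?thesis
    unfolding powers by (simp add: sum_gp_strict)
qed

definition deviation_bound :: "nat \<Rightarrow> nat \<Rightarrow> nat \<Rightarrow> nat \<Rightarrow> real" where
  "deviation_bound M N m a = (if a = m then (real M - 1) / real N else 1 / real N)"

lemma deviation_bound_le:
  "2 \<le> M \<Longrightarrow> deviation_bound M N m a \<le> (real M - 1) / real N"
  unfolding deviation_bound_def by (simp add: divide_right_mono)

lemma mean_deviation_bound_sq:
  assumes "m < M"
  shows "mean {..<M} (\<lambda>a. (deviation_bound M N m a)\<^sup>2) = (real M - 1) / (real N)\<^sup>2"
proof -
  have "(\<Sum>a<M. (deviation_bound M N m a)\<^sup>2)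
        = ((real M - 1) / real N)\<^sup>2 + (\<Sum>a\<in>{..<M} - {m}. (1 / real N)\<^sup>2)"
    using assms by (simp add: sum.remove deviation_bound_def)
  also have "\<dots> = ((real M - 1)\<^sup>2 + (real M - 1)) / (real N)\<^sup>2"
    using assms by (simp add: of_nat_diff power_divide add_divide_distrib)
  also have "\<dots> = real M * ((real M - 1) / (real N)\<^sup>2)"
    by (simp add: power2_eq_square algebra_simps)
  finally show ?thesis
    using assms unfolding mean_def by simp
qed

lemma lambda_coef_eq_sum:
  "lambda_coef M N C m dq
     = (\<Sum>n<N. dft_phase N dq n * (if C n = m then complex_of_real (real M / real N) else 0))"
  unfolding lambda_coef_def dft_phase_def zeta_def sum_distrib_left by (intro sum.cong) auto

lemma bounded_difference_at_lambda_coef: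
  assumes "0 < M" "k < N"
  shows "bounded_difference_at {..<M} N (\<lambda>C. lambda_coef M N C m dq) k (deviation_bound M N m)"
  unfolding lambda_coef_eq_sum
proof (rule bounded_difference_at_sum_coordinates[where z = "dft_phase N dq k / of_nat N"])
  fix a
  have "dft_phase N dq k * (if a = m then complex_of_real (real M / real N) else 0)
          - dft_phase N dq k / of_nat N
        = dft_phase N dq k
            * complex_of_real (if a = m then (real M - 1) / real N else - 1 / real N)"
    using assms(2) by (simp add: field_simps)
  also have "norm \<dots> = deviation_bound M N m a"
    unfolding norm_mult norm_dft_phase norm_of_real using assms(1)
    by (simp add: deviation_bound_def)
  finally show "norm (dft_phase N dq k * (if a = m then complex_of_real (real M / real N) else 0)
                   - dft_phase N dq k / of_nat N) \<le> deviation_bound M N m a"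
    by simp
qed (rule assms(2))

lemma mean_lambda_coef:
  assumes "m < M"
  shows "mean (words {..<M} N) (\<lambda>C. lambda_coef M N C m dq) = (\<Sum>n<N. dft_phase N dq n) / of_nat N"
proof -
  let ?x = "\<lambda>a. if a = m then complex_of_real (real M / real N) else 0"
  have "{..<M} \<noteq> {}"
    using assms by auto
  moreover have "mean {..<M} ?x = 1 / of_nat N"
    using assms unfolding mean_def by (simp add: scaleR_conv_of_real)
  ultimately have coordinate: "mean (words {..<M} N) (\<lambda>C. ?x (C n)) = 1 / of_nat N" if "n < N" for n
    using mean_words_coordinate[OF _ _ that, of "{..<M}" ?x] by simp
  have "mean (words {..<M} N) (\<lambda>C. lambda_coef M N C m dq)
        = (\<Sum>n<N. dft_phase N dq n * mean (words {..<M} N) (\<lambda>C. ?x (C n)))"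
    unfolding lambda_coef_eq_sum by (simp add: mean_sum mean_mult_left)
  also have "\<dots> = (\<Sum>n<N. dft_phase N dq n / of_nat N)"
    by (intro sum.cong) (simp_all add: coordinate)
  finally show ?thesis
    by (simp add: sum_divide_distrib)
qed

lemma sigma_bar_eq_norm:
  "sigma_bar M N C m dq = norm (lambda_coef M N C m dq - (if dq = 0 then 1 else 0))"
  unfolding sigma_bar_def by simp

lemma bounded_difference_at_sigma_bar:
  "0 < M \<Longrightarrow> k < N \<Longrightarrow>
    bounded_difference_at {..<M} N (\<lambda>C. sigma_bar M N C m dq) k (deviation_bound M N m)"
  unfolding sigma_bar_eq_norm
  by (intro bounded_difference_at_norm bounded_difference_at_diff_const
      bounded_difference_at_lambda_coef)

lemma mean_sigma_bar_le:
  assumes "m < M" "0 < N" "0 \<le> dq" "dq < int N"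
  shows "mean (words {..<M} N) (\<lambda>C. sigma_bar M N C m dq) \<le> sqrt ((real M - 1) / real N)"
proof -
  let ?S = "words {..<M} N"
  define W where "W = (\<lambda>C. lambda_coef M N C m dq - (if dq = 0 then 1 else 0))"
  have A: "finite {..<M}" "{..<M} \<noteq> {}"
    using assms(1) by auto
  then have S: "finite ?S" "?S \<noteq> {}"
    by (simp_all add: finite_words words_nonempty)
  have "(\<Sum>n<N. dft_phase N dq n) = (if dq = 0 then of_nat N else 0)"
    using assms(2-4) sum_dft_phase_eq_0[of N dq] zdvd_imp_le[of "int N" dq]
    by (cases "dq = 0") (auto simp: dft_phase_def)
  then have "mean ?S W = 0"
    unfolding W_def using assms(1,2) S by (simp add: mean_diff mean_lambda_coef mean_const)
  then have "(mean ?S (\<lambda>C. norm (W C)))\<^sup>2 \<le> mean ?S (\<lambda>C. (norm (W C - mean ?S W))\<^sup>2)"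
    using norm_mean_sq_le[OF S, of "\<lambda>C. norm (W C)"] by simp
  also have "\<dots> \<le> real N * ((real M - 1) / (real N)\<^sup>2)"
  proof (rule bounded_differences_variance_le[OF A])
    show "mean {..<M} (\<lambda>a. (deviation_bound M N m a)\<^sup>2) \<le> (real M - 1) / (real N)\<^sup>2"
      using assms(1) by (simp add: mean_deviation_bound_sq)
    show "\<forall>k<N. bounded_difference_at {..<M} N W k (deviation_bound M N m)"
      unfolding W_def using assms(1)
      by (intro allI impI bounded_difference_at_diff_const bounded_difference_at_lambda_coef) auto
  qed
  also have "\<dots> = (real M - 1) / real N"
    by (simp add: power2_eq_square)
  finally have "mean ?S (\<lambda>C. norm (W C)) \<le> sqrt ((real M - 1) / real N)"
    by (rule real_le_rsqrt)
  then show ?thesis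
    by (simp add: sigma_bar_eq_norm W_def)
qed

theorem theorem2:
  fixes M N m :: nat and dq :: int and \<epsilon> :: real
  assumes "M \<ge> 2" and "N > 0"
    and "0 < \<epsilon>" and "\<epsilon> \<le> 1"
    and "m < M"
    and "0 \<le> dq" and "dq \<le> \<lfloor>real N / 2\<rfloor>"
  shows "measure_pmf.prob (code_pmf M N)
           {C. sigma_bar M N C m dq > sqrt ((real M - 1) / real N) + \<epsilon>}
         < exp (- (real N / (4 * (real M - 1))) * \<epsilon>\<^sup>2)"
proof -
  let ?S = "words {..<M} N" and ?\<sigma> = "\<lambda>C. sigma_bar M N C m dq"
  define V where "V = (real M - 1) / real N"
  have "real_of_int dq \<le> real N / 2"
    using assms(7) by linarith
  then have "mean ?S ?\<sigma> \<le> sqrt V"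
    unfolding V_def using assms(2,5,6) by (intro mean_sigma_bar_le) simp_all
  then have "measure_pmf.prob (code_pmf M N) {C. ?\<sigma> C > sqrt V + \<epsilon>}
             \<le> measure_pmf.prob (pmf_of_set ?S) {C. mean ?S ?\<sigma> + \<epsilon> \<le> ?\<sigma> C}"
    unfolding code_pmf_def words_def[symmetric]
    by (intro measure_pmf.finite_measure_mono) auto
  also have "\<dots> < exp (- \<epsilon>\<^sup>2 / (4 * real N * ((real M - 1) / (real N)\<^sup>2)))"
  proof (rule bounded_differences_tail[where c = "deviation_bound M N m" and \<mu> = V])
    have "\<epsilon> * V \<le> V"
      using assms(1,3,4) by (intro mult_left_le_one_le) (simp_all add: V_def)
    then show "\<epsilon> * V \<le> real N * ((real M - 1) / (real N)\<^sup>2)"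
      using assms(2) by (simp add: V_def power2_eq_square)
  qed (use assms in \<open>auto simp: V_def deviation_bound_le mean_deviation_bound_sq
                        bounded_difference_at_sigma_bar\<close>)
  also have "\<dots> = exp (- (real N / (4 * (real M - 1))) * \<epsilon>\<^sup>2)"
    using assms(2) by (simp add: power2_eq_square)
  finally show ?thesis
    unfolding V_def .
qed

end
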